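(* Suppose Assumptions (A1)–(A3) hold and $a<1/U_L$. Let $\Gamma\ge0$, $\epsilon\in(0,1]$, and $\zeta_1(\epsilon):=\ln\frac{3(\sigma_L+\mathcal C_\mu)peR}{\epsilon}$. Assume: (i) $\hat\beta$, with $\|\hat\beta\|_\infty\le R$, satisfies S$^3$ONC$(\mathbf Z_1^n)$ almost surely; (ii) $\mathcal L_{n,\lambda}(\hat\beta,\mathbf Z_1^n)\le\mathcal L_{n,\lambda}(\beta^*_{\hat\varepsilon},\mathbf Z_1^n)+\Gamma$ with probability one; (iii) $\tilde p_u>s$ is an integer such that, for all integers $\tilde p$ with $\tilde p_u\le\tilde p\le p$, $$(\tilde p-s)P_\lambda(a\lambda)>\frac{4\sigma}{nc}\zeta_1(\epsilon)\tilde p+\frac{2\sigma}{\sqrt n}\sqrt{\frac{2\tilde p}{c}\zeta_1(\epsilon)}+\Gamma+2\epsilon+\hat\varepsilon.$$ Then, for some constant $\tilde c>0$, with probability at least $1-2(p+1)e^{-\tilde cn}-6\exp(-\tilde p_u\zeta_1(\epsilon))$, $$\mathbb L(\hat\beta)-\mathbb L(\beta^* )\le sP_\lambda(a\lambda)+\frac{2\sigma}{\sqrt n}\sqrt{\frac{2\tilde p_u}{c}\zeta_1(\epsilon)}+\frac{4\sigma}{n}\cdot\frac{\tilde p_u}{c}\zeta_1(\epsilon)+2\epsilon+\hat\varepsilon+\Gamma.$$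
   Context: Standing setup. Let $Z_1,\dots,Z_n$ be i.i.d. random samples with support $\mathcal W\subseteq\mathbb R^q$, and write $\mathbf Z_1^n=(Z_1,\dots,Z_n)$. Let $L:\mathbb R^p\times\mathcal W\to\mathbb R$ ($p>2$) be measurable and deterministic. Define $\mathcal L_n(\beta,\mathbf Z_1^n)=\frac1n\sum_iL(\beta,Z_i)$ and $\mathbb L(\beta)=\mathbb E[\mathcal L_n(\beta,\mathbf Z_1^n)]$. Let $\beta^*\in\arg\min_\beta\mathbb L(\beta)$ with $\|\beta^*\|_\infty\le R$, $R\ge1$. $L(\cdot,z)$ is continuously differentiable for a.e. $z$ with coordinatewise Lipschitz partial derivatives of constant $U_L\ge1$: $$|\partial_{\beta_j}\mathcal L_n(\tilde\beta+\delta e_j,z)-\partial_{\beta_j}\mathcal L_n(\tilde\beta,z)|\le U_L|\delta|.$$ Penalty. $P_\lambda(\theta)=\int_0^\theta\frac{[a\lambda-t]_+}{a}dt$ (so $P_\lambda(a\lambda)=a\lambda^2/2$), and $\mathcal L_{n,\lambda}(\beta,\mathbf Z_1^n)=\mathcal L_n(\beta,\mathbf Z_1^n)+\sum_jP_\lambda(|\beta_j|)$. $\|\cdot\|$ is the Euclidean norm and $\|\cdot\|_0$ counts nonzeros. (A1) (A-sparsity). There is $\beta^*_{\hat\varepsilon}$ with $\|\beta^*_{\hat\varepsilon}\|_\infty\le R$, $s:=\|\beta^*_{\hat\varepsilon}\|_0\ge1$ and $\mathbb L(\beta^*_{\hat\varepsilon})-\mathbb L(\beta^* )\le\hat\varepsilon$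 ($\hat\varepsilon\ge0$). (A2). For every $\beta$, the variables $L(\beta,Z_i)-\mathbb EL(\beta,Z_i)$ are independent, sub-exponential, with $\psi_1$-norm $\le\sigma$ ($\sigma\ge1$). $c\in(0,0.5]$ is the absolute constant with $$\mathbb P(|\sum_ia_i\{L(\beta,Z_i)-\mathbb EL(\beta,Z_i)\}|>\sigma(\|\mathbf a\|\sqrt t+\|\mathbf a\|_\infty t))\le2e^{-ct}\quad\text{for all } t\ge0,\ \mathbf a.$$ (A3). There is a measurable deterministic $\mathcal C:\mathcal W\to\mathbb R_+$ with $\|\mathcal C(Z_i)-\mathbb E\mathcal C(Z_i)\|_{\psi_1}\le\sigma_L$ ($\sigma_L\ge1$), $\mathbb E|\mathcal C(Z_i)|\le\mathcal C_\mu$ ($\mathcal C_\mu\ge1$), and $|L(\beta_1,z)-L(\beta_2,z)|\le\mathcal C(z)\|\beta_1-\beta_2\|$. S$^3$ONC$(\mathbf Z_1^n)$. It holds at $\hat\beta$ if both of the following hold. (a) There exist $g_j$, with $g_j=P'_\lambda(|\hat\beta_j|)\mathrm{sign}(\hat\beta_j)$ if $\hat\beta_j\ne0$ and $g_j\in[-\lambda,\lambda]$ if $\hat\beta_j=0$, with $\partial_{\beta_j}\mathcal L_n(\hat\beta,\mathbf Z_1^n)+g_j=0$ for all $j$. (b) For every $j$ with $|\hat\beta_j|\in(0,a\lambda)$, $U_L+P''_\lambda(|\hat\beta_j|)\ge0$. *)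

theory Defs
  imports "HOL-Probability.Probability"
begin

text \<open>Empirical loss  L_n(beta, z_1..z_n) = (1/n) sum_{i<n} L(beta, z_i);
  the sample Z_1..Z_n is represented by the values zs 0, ..., zs (n-1).\<close>
definition emp_loss :: "(real^'p \<Rightarrow> 'w \<Rightarrow> real) \<Rightarrow> nat \<Rightarrow> real^'p \<Rightarrow> (nat \<Rightarrow> 'w) \<Rightarrow> real" where
  "emp_loss L n beta zs = (\<Sum>i<n. L beta (zs i)) / real n"

definition pop_loss :: "'o measure \<Rightarrow> (real^'p \<Rightarrow> 'w \<Rightarrow> real) \<Rightarrow> (nat \<Rightarrow> 'o \<Rightarrow> 'w) \<Rightarrow> nat \<Rightarrow> real^'p \<Rightarrow> real" where
  "pop_loss M L Z n beta = integral\<^sup>L M (\<lambda>\<omega>. emp_loss L n beta (\<lambda>i. Z i \<omega>))"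

definition penalty :: "real \<Rightarrow> real \<Rightarrow> real \<Rightarrow> real" where
  "penalty lam a \<theta> = integral {0..\<theta>} (\<lambda>t. max (a * lam - t) 0 / a)"

definition pen_loss :: "(real^'p \<Rightarrow> 'w \<Rightarrow> real) \<Rightarrow> real \<Rightarrow> real \<Rightarrow> nat \<Rightarrow> real^'p \<Rightarrow> (nat \<Rightarrow> 'w) \<Rightarrow> real" where
  "pen_loss L lam a n beta zs = emp_loss L n beta zs + (\<Sum>j\<in>UNIV. penalty lam a \<bar>beta $ j\<bar>)"

definition partial :: "(real^'p \<Rightarrow> real) \<Rightarrow> real^'p \<Rightarrow> 'p \<Rightarrow> real" where
  "partial f beta j = deriv (\<lambda>t. f (beta + t *\<^sub>R axis j 1)) 0"

definition S3ONC :: "(real^'p \<Rightarrow> 'w \<Rightarrow> real) \<Rightarrow> real \<Rightarrow> real \<Rightarrow> real \<Rightarrow> nat \<Rightarrow> (nat \<Rightarrow> 'w) \<Rightarrow> real^'p \<Rightarrow> bool" where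
  "S3ONC L U_L lam a n zs bh \<longleftrightarrow>
     (\<exists>g :: 'p \<Rightarrow> real.
        (\<forall>j. (if bh $ j \<noteq> 0 then g j = deriv (penalty lam a) \<bar>bh $ j\<bar> * sgn (bh $ j)
                else g j \<in> {-lam..lam})
             \<and> partial (\<lambda>b. emp_loss L n b zs) bh j + g j = 0))
   \<and> (\<forall>j. \<bar>bh $ j\<bar> \<in> {0<..<a * lam} \<longrightarrow> U_L + deriv (deriv (penalty lam a)) \<bar>bh $ j\<bar> \<ge> 0)"

text \<open>Sub-exponential (Orlicz psi_1) norm: inf{t > 0. E exp(|X|/t) <= 2}, with inf {} = infinity.\<close>
definition psi1_norm :: "'o measure \<Rightarrow> ('o \<Rightarrow> real) \<Rightarrow> ereal" where
  "psi1_norm M X = Inf (ereal ` {t. t > 0 \<and> (\<integral>\<^sup>+ \<omega>. ennreal (exp (\<bar>X \<omega>\<bar> / t)) \<partial>M) \<le> 2})"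

definition zeta1 :: "real \<Rightarrow> real \<Rightarrow> nat \<Rightarrow> real \<Rightarrow> real \<Rightarrow> real" where
  "zeta1 \<sigma>L C\<mu> p R \<epsilon> = ln (3 * (\<sigma>L + C\<mu>) * real p * exp 1 * R / \<epsilon>)"

end

theory Submission
  imports Defs
begin

text \<open>At a point satisfying S3ONC with \<open>a < 1/U_L\<close> every nonzero coordinate lies beyond
  \<open>a \<lambda>\<close>, where the penalty is flat. Hence the penalty of \<open>\<beta>hat\<close> equals \<open>k P(a \<lambda>)\<close> with \<open>k\<close> its
  support size, and the penalized basic inequality trades \<open>k - s\<close> units of \<open>P(a \<lambda>)\<close> against
  the deviation \<open>|L_n - LL|\<close> at sparsity level \<open>max k p_u\<close>. That deviation is bounded
  uniformly over \<open>k\<close>-sparse vectors of the \<open>R\<close>-cube by a union bound over a grid net with at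
  most \<open>exp (k \<zeta>)\<close> points, the Lipschitz condition (A3) transferring the bound from the net
  to all such vectors at cost \<open>2 \<epsilon>\<close>. Testing level \<open>k\<close> at Bernstein parameter \<open>2 k \<zeta> / c\<close>
  makes the failure probabilities decay geometrically in \<open>k\<close>. Condition (iii) then excludes
  \<open>k \<ge> p_u\<close>, and for \<open>k < p_u\<close> the bound is the claimed one.\<close>

lemma penalty_eq_quadratic:
  assumes a: "0 < a" and \<theta>: "0 \<le> \<theta>" "\<theta> \<le> a * lam"
  shows "penalty lam a \<theta> = lam * \<theta> - \<theta>\<^sup>2 / (2 * a)"
proof -
  have "integral {0..\<theta>} (\<lambda>t. max (a * lam - t) 0 / a) = integral {0..\<theta>} (\<lambda>t. lam - t / a)"
    using \<theta> a by (intro integral_cong) (auto simp: field_simps max_def)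
  also have "((\<lambda>t. lam - t / a) has_integral
      (lam * \<theta> - \<theta>\<^sup>2 / (2 * a)) - (lam * 0 - 0\<^sup>2 / (2 * a))) {0..\<theta>}"
  proof (rule fundamental_theorem_of_calculus)
    fix x
    show "((\<lambda>t. lam * t - t\<^sup>2 / (2 * a)) has_vector_derivative lam - x / a) (at x within {0..\<theta>})"
      unfolding has_real_derivative_iff_has_vector_derivative[symmetric]
      using a by (auto intro!: derivative_eq_intros simp: field_simps)
  qed (use \<theta> in simp)
  then have "integral {0..\<theta>} (\<lambda>t. lam - t / a) = lam * \<theta> - \<theta>\<^sup>2 / (2 * a)"
    by (simp add: integral_unique)
  finally show ?thesis by (simp add: penalty_def)
qed

lemma penalty_zero: "0 < a \<Longrightarrow> 0 < lam \<Longrightarrow> penalty lam a 0 = 0"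
  using penalty_eq_quadratic[of a 0 lam] by simp

lemma penalty_at_a_lam: "0 < a \<Longrightarrow> 0 < lam \<Longrightarrow> penalty lam a (a * lam) = a * lam\<^sup>2 / 2"
  using penalty_eq_quadratic[of a "a * lam" lam] by (simp add: field_simps power2_eq_square)

lemma penalty_beyond_a_lam:
  assumes a: "0 < a" and lam: "0 < lam" and \<theta>: "a * lam \<le> \<theta>"
  shows "penalty lam a \<theta> = penalty lam a (a * lam)"
proof -
  let ?f = "\<lambda>t. max (a * lam - t) 0 / a"
  have "continuous_on {0..\<theta>} ?f" by (intro continuous_intros) (use a in auto)
  then have "integral {0..\<theta>} ?f = integral {0..a * lam} ?f + integral {a * lam..\<theta>} ?f"
    using a lam \<theta> by (intro Henstock_Kurzweil_Integration.integral_combine[symmetric] integrable_continuous_real) auto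
  moreover have "integral {a * lam..\<theta>} ?f = integral {a * lam..\<theta>} (\<lambda>_. 0)"
    by (intro integral_cong) (auto simp: max_def)
  ultimately show ?thesis by (simp add: penalty_def)
qed

lemma penalty_le_penalty_a_lam:
  assumes a: "0 < a" and lam: "0 < lam" and \<theta>: "0 \<le> \<theta>"
  shows "penalty lam a \<theta> \<le> penalty lam a (a * lam)"
proof (cases "\<theta> \<le> a * lam")
  case True
  have "a * lam\<^sup>2 / 2 - (lam * \<theta> - \<theta>\<^sup>2 / (2 * a)) = (a * lam - \<theta>)\<^sup>2 / (2 * a)"
    using a by (simp add: field_simps power2_eq_square)
  moreover have "0 \<le> (a * lam - \<theta>)\<^sup>2 / (2 * a)" using a by simp
  ultimately show ?thesis
    using penalty_eq_quadratic[OF a \<theta> True] penalty_at_a_lam[OF a lam] by linarith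
qed (use penalty_beyond_a_lam[OF a lam, of \<theta>] in simp)

lemma deriv2_penalty:
  assumes a: "0 < a" and x: "0 < x" "x < a * lam"
  shows "deriv (deriv (penalty lam a)) x = - 1 / a"
proof -
  have deriv_penalty: "deriv (penalty lam a) y = lam - y / a" if "y \<in> {0<..<a * lam}" for y
  proof (rule DERIV_imp_deriv)
    have "((\<lambda>t. lam * t - t\<^sup>2 / (2 * a)) has_field_derivative lam - y / a) (at y)"
      using a by (auto intro!: derivative_eq_intros simp: field_simps)
    then show "(penalty lam a has_field_derivative lam - y / a) (at y)"
      by (rule has_field_derivative_transform_within_open[where S = "{0<..<a * lam}"])
         (use that a in \<open>auto intro!: penalty_eq_quadratic[symmetric]\<close>)
  qed
  have "((\<lambda>y. lam - y / a) has_field_derivative - 1 / a) (at x)"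
    using a by (auto intro!: derivative_eq_intros)
  then have "(deriv (penalty lam a) has_field_derivative - 1 / a) (at x)"
    by (rule has_field_derivative_transform_within_open[where S = "{0<..<a * lam}"])
       (use x deriv_penalty in auto)
  then show ?thesis by (rule DERIV_imp_deriv)
qed

lemma sum_penalty_le_card_support:
  fixes b :: "real^'p"
  assumes "0 < a" "0 < lam"
  shows "(\<Sum>j\<in>UNIV. penalty lam a \<bar>b $ j\<bar>) \<le> real (card {j. b $ j \<noteq> 0}) * penalty lam a (a * lam)"
proof -
  have "(\<Sum>j\<in>UNIV. penalty lam a \<bar>b $ j\<bar>) = (\<Sum>j\<in>{j. b $ j \<noteq> 0}. penalty lam a \<bar>b $ j\<bar>)"
    using penalty_zero[OF assms] by (intro sum.mono_neutral_right) auto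
  also have "\<dots> \<le> (\<Sum>j\<in>{j. b $ j \<noteq> 0}. penalty lam a (a * lam))"
    by (intro sum_mono penalty_le_penalty_a_lam assms) simp
  finally show ?thesis by simp
qed

lemma sum_penalty_eq_card_support:
  fixes b :: "real^'p"
  assumes "0 < a" "0 < lam" and large: "\<And>j. b $ j \<noteq> 0 \<Longrightarrow> a * lam \<le> \<bar>b $ j\<bar>"
  shows "(\<Sum>j\<in>UNIV. penalty lam a \<bar>b $ j\<bar>) = real (card {j. b $ j \<noteq> 0}) * penalty lam a (a * lam)"
proof -
  have "(\<Sum>j\<in>UNIV. penalty lam a \<bar>b $ j\<bar>) = (\<Sum>j\<in>{j. b $ j \<noteq> 0}. penalty lam a \<bar>b $ j\<bar>)"
    using penalty_zero[OF assms(1,2)] by (intro sum.mono_neutral_right) auto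
  also have "\<dots> = (\<Sum>j\<in>{j. b $ j \<noteq> 0}. penalty lam a (a * lam))"
    using penalty_beyond_a_lam[OF assms(1,2) large] by (intro sum.cong) auto
  finally show ?thesis by simp
qed

lemma S3ONC_nonzero_large:
  assumes "S3ONC L U_L lam a n zs b" and a: "0 < a" "a * U_L < 1" and "b $ j \<noteq> 0"
  shows "a * lam \<le> \<bar>b $ j\<bar>"
proof (rule ccontr)
  assume "\<not> a * lam \<le> \<bar>b $ j\<bar>"
  then have small: "\<bar>b $ j\<bar> \<in> {0<..<a * lam}" using \<open>b $ j \<noteq> 0\<close> by auto
  then have "0 \<le> U_L + deriv (deriv (penalty lam a)) \<bar>b $ j\<bar>"
    using assms(1) unfolding S3ONC_def by blast
  also have "\<dots> = U_L - 1 / a" using deriv2_penalty[OF a(1)] small by simp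
  finally show False using a by (simp add: field_simps)
qed

lemma S3ONC_excess_risk:
  fixes b beps bstar :: "real^'p" and pop :: "real^'p \<Rightarrow> real" and D :: "nat \<Rightarrow> real"
    and lam a :: real
  defines "P \<equiv> penalty lam a (a * lam)" and "k \<equiv> card {j. b $ j \<noteq> 0}"
  assumes S3ONC: "S3ONC L U_L lam a n zs b" and a: "0 < a" "a * U_L < 1" and lam: "0 < lam"
    and pen: "pen_loss L lam a n b zs \<le> pen_loss L lam a n beps zs + \<Gamma>"
    and dev_b: "\<bar>emp_loss L n b zs - pop b\<bar> \<le> D (max k pu) + 2 * \<epsilon>"
    and dev_beps: "\<bar>emp_loss L n beps zs - pop beps\<bar> \<le> D pu"
    and D: "mono D"
    and min: "pop bstar \<le> pop b" and approx: "pop beps - pop bstar \<le> epshat"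
    and s: "s = card {j. beps $ j \<noteq> 0}"
    and gap: "\<And>k. pu \<le> k \<Longrightarrow> k \<le> CARD('p) \<Longrightarrow> 2 * D k + \<Gamma> + 2 * \<epsilon> + epshat < (real k - real s) * P"
  shows "pop b - pop bstar \<le> real s * P + 2 * D pu + 2 * \<epsilon> + epshat + \<Gamma>"
proof -
  have "(\<Sum>j\<in>UNIV. penalty lam a \<bar>b $ j\<bar>) = real k * P"
    unfolding k_def P_def using S3ONC_nonzero_large[OF S3ONC a] a lam
    by (intro sum_penalty_eq_card_support) auto
  moreover have "(\<Sum>j\<in>UNIV. penalty lam a \<bar>beps $ j\<bar>) \<le> real s * P"
    unfolding s P_def by (rule sum_penalty_le_card_support[OF a(1) lam])
  ultimately have basic: "emp_loss L n b zs + real k * P \<le> emp_loss L n beps zs + real s * P + \<Gamma>"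
    using pen unfolding pen_loss_def by linarith
  have "D pu \<le> D (max k pu)" using D by (simp add: monoD)
  then have excess: "pop b - pop beps \<le> (real s - real k) * P + \<Gamma> + 2 * D (max k pu) + 2 * \<epsilon>"
    using basic dev_b dev_beps unfolding abs_le_iff left_diff_distrib by linarith
  show ?thesis
  proof (cases "pu \<le> k")
    case True
    have "k \<le> CARD('p)" unfolding k_def by (rule card_mono) auto
    then have "pop b < pop bstar"
      using gap[OF True] excess approx True by (simp add: max_def algebra_simps)
    then show ?thesis using min by simp
  next
    case False
    have "0 \<le> P" unfolding P_def penalty_at_a_lam[OF a(1) lam] using a lam by simp
    then have "0 \<le> real k * P" by simp
    moreover have "max k pu = pu" using False by simp
    ultimately show ?thesis using excess approx unfolding left_diff_distrib by linarith
  qed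
qed

lemma fact_squared_ge_self_power: "q ^ q \<le> (fact q :: nat)\<^sup>2"
proof -
  have "(fact q :: nat)\<^sup>2 = (\<Prod>k\<in>{1..q}. k) * (\<Prod>k\<in>{1..q}. q + 1 - k)"
    by (simp add: fact_prod power2_eq_square,
        rule prod.reindex_bij_witness[where i = "\<lambda>k. q + 1 - k" and j = "\<lambda>k. q + 1 - k"]) auto
  also have "\<dots> = (\<Prod>k\<in>{1..q}. k * (q + 1 - k))" by (simp add: prod.distrib)
  also have "(\<Prod>k\<in>{1..q}. q) \<le> \<dots>"
  proof (rule prod_mono)
    fix k assume "k \<in> {1..q}"
    then obtain i j where "k = i + 1" "q = k + j" by (metis atLeastAtMost_iff le_Suc_ex le_iff_add add.commute)
    then show "0 \<le> q \<and> q \<le> k * (q + 1 - k)" by (simp add: algebra_simps)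
  qed
  finally show ?thesis by simp
qed

lemma sqrt_power_le_fact: "sqrt (real q) ^ q \<le> fact q"
proof (rule power2_le_imp_le)
  have "real (q ^ q) \<le> real ((fact q :: nat)\<^sup>2)"
    using fact_squared_ge_self_power of_nat_le_iff by blast
  then show "(sqrt (real q) ^ q)\<^sup>2 \<le> (fact q)\<^sup>2"
    by (simp add: power_mult_distrib[symmetric] power_mult[symmetric] mult.commute[of q 2]
        power_mult of_nat_fact)
qed simp

text \<open>Via \<open>(p choose q) \<le> p^q / q! \<le> p^q / sqrt q ^ q\<close>: the factor \<open>sqrt q ^ q\<close> cancels the
  \<open>sqrt q\<close> in the number \<open>X sqrt q + 3\<close> of grid values per coordinate.\<close>
lemma binomial_mult_power_le:
  fixes X :: real
  assumes X: "2 \<le> X"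
  shows "real (p choose q) * (X * sqrt q + 3) ^ q \<le> (3 * exp 1 * real p * X) ^ q"
proof -
  have "real (p choose q) * sqrt (real q) ^ q \<le> real (p choose q) * fact q"
    by (intro mult_left_mono sqrt_power_le_fact) simp
  also have "\<dots> \<le> real p ^ q"
    by (metis binomial_fact_pow of_nat_fact of_nat_le_iff of_nat_mult of_nat_power)
  finally have choose: "real (p choose q) * sqrt (real q) ^ q \<le> real p ^ q" .
  have "X * sqrt q + 3 \<le> (X + 3) * sqrt q" if "q \<noteq> 0"
    using X that by (simp add: algebra_simps)
  then have "(X * sqrt q + 3) ^ q \<le> ((X + 3) * sqrt q) ^ q"
    using X by (cases "q = 0") (auto intro!: power_mono)
  then have "real (p choose q) * (X * sqrt q + 3) ^ q
      \<le> (real (p choose q) * sqrt (real q) ^ q) * (X + 3) ^ q"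
    by (auto intro!: mult_left_mono simp: power_mult_distrib mult_ac)
  also have "\<dots> \<le> real p ^ q * (X + 3) ^ q"
    using choose X by (intro mult_right_mono) auto
  also have "\<dots> \<le> (3 * exp 1 * real p * X) ^ q"
    unfolding power_mult_distrib[symmetric]
  proof (rule power_mono)
    have "6 * X \<le> 3 * exp 1 * X" using X exp_ge_add_one_self[of 1] by simp
    then have "X + 3 \<le> 3 * exp 1 * X" using X by linarith
    from mult_left_mono[OF this, of "real p"]
    show "real p * (X + 3) \<le> 3 * exp 1 * real p * X" by (simp add: algebra_simps)
  qed (use X in simp)
  finally show ?thesis .
qed

lemma geometric_sum_le_twice_first:
  fixes r :: real
  assumes "0 \<le> r" "r \<le> 1/2"
  shows "(\<Sum>k=m..N. r ^ k) \<le> 2 * r ^ m"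
proof (cases "N < m")
  case False
  then have "(\<Sum>k=m..N. r ^ k) = (r ^ m - r ^ Suc N) / (1 - r)"
    using assms by (simp add: sum_gp)
  also have "\<dots> \<le> r ^ m / (1 - r)"
    using assms by (intro divide_right_mono) auto
  also have "\<dots> \<le> r ^ m / (1/2)"
    using assms by (intro divide_left_mono) auto
  finally show ?thesis by simp
qed (use assms in simp)

definition sparse_grid :: "nat \<Rightarrow> real \<Rightarrow> real \<Rightarrow> (real^'p) set" where
  "sparse_grid q h R = (\<lambda>(S, m). \<chi> j. if j \<in> S then h * of_int (m j) else 0) `
     (SIGMA S:{S. card S = q}. PiE S (\<lambda>_. {- \<lceil>R / h\<rceil>..\<lceil>R / h\<rceil>}))"

lemma finite_sparse_grid: "finite (sparse_grid q h R :: (real^'p) set)"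
  unfolding sparse_grid_def by (intro finite_imageI finite_SigmaI finite_PiE) auto

lemma card_sparse_grid:
  assumes h: "0 < h" and R: "0 \<le> R"
  shows "real (card (sparse_grid q h R :: (real^'p) set)) \<le> real (CARD('p) choose q) * (2 * R / h + 3) ^ q"
proof -
  define K where "K = \<lceil>R / h\<rceil>"
  have "0 \<le> R / h" using h R by simp
  then have K: "0 \<le> K" "real_of_int K \<le> R / h + 1"
    unfolding K_def using ceiling_correct[of "R / h"] by simp_all
  let ?A = "SIGMA S:{S::'p set. card S = q}. PiE S (\<lambda>_. {- K..K})"
  have "card (sparse_grid q h R :: (real^'p) set) \<le> card ?A"
    unfolding sparse_grid_def K_def by (intro card_image_le finite_SigmaI finite_PiE) auto
  also have "card ?A = (\<Sum>S\<in>{S::'p set. card S = q}. nat (2 * K + 1) ^ q)"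
    by (subst card_SigmaI) (auto intro!: finite_PiE sum.cong simp: card_PiE)
  also have "\<dots> = (CARD('p) choose q) * nat (2 * K + 1) ^ q"
    using n_subsets[of "UNIV :: 'p set" q] by simp
  finally have "real (card (sparse_grid q h R :: (real^'p) set))
      \<le> real (CARD('p) choose q) * real (nat (2 * K + 1)) ^ q"
    by (metis of_nat_le_iff of_nat_mult of_nat_power)
  also have "real (nat (2 * K + 1)) = 2 * real_of_int K + 1" using K by simp
  also have "real (CARD('p) choose q) * (2 * real_of_int K + 1) ^ q
      \<le> real (CARD('p) choose q) * (2 * R / h + 3) ^ q"
    using K by (intro mult_left_mono power_mono) auto
  finally show ?thesis .
qed

lemma sparse_grid_covers:
  fixes b :: "real^'p"
  assumes h: "0 < h" and bR: "\<And>j. \<bar>b $ j\<bar> \<le> R"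
    and sparse: "card {j. b $ j \<noteq> 0} \<le> q" and q: "q \<le> CARD('p)"
  shows "\<exists>g \<in> sparse_grid q h R. norm (b - g) \<le> sqrt q * h / 2"
proof -
  let ?T = "{j. b $ j \<noteq> 0}"
  have "q - card ?T \<le> card (UNIV - ?T)" using q sparse by (simp add: card_Diff_subset)
  then obtain U where U: "U \<subseteq> UNIV - ?T" "card U = q - card ?T" "finite U"
    by (rule obtain_subset_with_card_n)
  define S where "S = ?T \<union> U"
  have card_S: "card S = q" unfolding S_def using U sparse by (subst card_Un_disjoint) auto
  define m where "m = (\<lambda>j. if j \<in> S then round (b $ j / h) else undefined)"
  have "m \<in> PiE S (\<lambda>_. {- \<lceil>R / h\<rceil>..\<lceil>R / h\<rceil>})"
  proof -
    have "round (b $ j / h) \<in> {- \<lceil>R / h\<rceil>..\<lceil>R / h\<rceil>}" for j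
    proof -
      have "\<bar>b $ j / h\<bar> \<le> R / h" using bR h by (simp add: abs_divide divide_right_mono)
      then have "real_of_int \<bar>round (b $ j / h)\<bar> < real_of_int (\<lceil>R / h\<rceil> + 1)"
        using of_int_round_abs_le[of "b $ j / h"] le_of_int_ceiling[of "R / h"] by linarith
      then show ?thesis by simp linarith
    qed
    then show ?thesis unfolding m_def by auto
  qed
  then have g: "(\<chi> j. if j \<in> S then h * of_int (m j) else 0) \<in> sparse_grid q h R"
    unfolding sparse_grid_def using card_S by (intro image_eqI[where x = "(S, m)"]) auto
  have entry: "(b $ j - (if j \<in> S then h * of_int (m j) else 0))\<^sup>2 \<le> (if j \<in> S then (h / 2)\<^sup>2 else 0)" for j
  proof (cases "j \<in> S")
    case True
    have "\<bar>of_int (round (b $ j / h)) - b $ j / h\<bar> \<le> 1 / 2" by (rule of_int_round_abs_le)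
    then have "\<bar>b $ j - h * of_int (m j)\<bar> \<le> h / 2"
      using h True unfolding m_def by (simp add: abs_minus_commute field_simps)
    then show ?thesis using True by (simp add: abs_le_square_iff[symmetric] power2_abs)
  qed (auto simp: S_def)
  have "norm (b - (\<chi> j. if j \<in> S then h * of_int (m j) else 0))
      \<le> sqrt (\<Sum>j\<in>UNIV. if j \<in> S then (h / 2)\<^sup>2 else 0)"
    unfolding norm_vec_def L2_set_def by (auto intro!: sum_mono entry)
  also have "\<dots> = sqrt q * h / 2" using card_S h by (simp add: sum.If_cases real_sqrt_mult)
  finally show ?thesis using g by blast
qed

lemma emp_loss_lipschitz:
  assumes "\<And>i. i < n \<Longrightarrow> \<bar>L b (zs i) - L g (zs i)\<bar> \<le> C (zs i) * norm (b - g)"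
  shows "\<bar>emp_loss L n b zs - emp_loss L n g zs\<bar> \<le> (\<Sum>i<n. C (zs i)) / real n * norm (b - g)"
proof -
  have "\<bar>emp_loss L n b zs - emp_loss L n g zs\<bar> = \<bar>\<Sum>i<n. L b (zs i) - L g (zs i)\<bar> / real n"
    unfolding emp_loss_def by (simp add: sum_subtractf diff_divide_distrib[symmetric])
  also have "\<dots> \<le> (\<Sum>i<n. C (zs i) * norm (b - g)) / real n"
    by (intro divide_right_mono order.trans[OF sum_abs] sum_mono assms) auto
  finally show ?thesis by (simp add: sum_distrib_right)
qed

lemma uniform_weights_bernstein_scale:
  assumes "1 \<le> n"
  shows "sqrt (\<Sum>i<n. (1 / real n)\<^sup>2) * sqrt t + (MAX i\<in>{..<n}. \<bar>1 / real n\<bar>) * t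
    = sqrt (t / n) + t / n"
proof -
  have "0 \<in> {..<n}" using assms by simp
  then have "(MAX i\<in>{..<n}. \<bar>1 / real n\<bar>) = 1 / real n"
    by (subst Max_const) auto
  moreover have "sqrt (\<Sum>i<n. (1 / real n)\<^sup>2) * sqrt t = sqrt (t / n)"
    using assms by (simp add: power2_eq_square real_sqrt_divide real_sqrt_mult)
  ultimately show ?thesis by simp
qed

lemma zeta1_bounds:
  fixes \<sigma>L C\<mu> R \<epsilon> :: real and p :: nat
  defines "X \<equiv> (\<sigma>L + C\<mu>) * R / \<epsilon>"
  assumes "1 \<le> \<sigma>L" "1 \<le> C\<mu>" "1 \<le> R" "0 < \<epsilon>" "\<epsilon> \<le> 1" "1 \<le> p"
  shows zeta1_scale_ge_two: "2 \<le> X"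
    and exp_zeta1: "exp (zeta1 \<sigma>L C\<mu> p R \<epsilon>) = 3 * exp 1 * real p * X"
    and exp_neg_zeta1_le_half: "exp (- zeta1 \<sigma>L C\<mu> p R \<epsilon>) \<le> 1 / 2"
    and zeta1_pos: "0 < zeta1 \<sigma>L C\<mu> p R \<epsilon>"
proof -
  have "2 \<le> (\<sigma>L + C\<mu>) * R" using assms mult_mono[of 2 "\<sigma>L + C\<mu>" 1 R] by simp
  also have "\<dots> \<le> X" unfolding X_def using assms by (simp add: le_divide_eq mult_left_le)
  finally show X: "2 \<le> X" .
  have two: "2 \<le> 3 * exp 1 * real p * X"
    using X assms mult_mono[of 1 "exp 1" 1 "real p"] mult_mono[of 1 "exp 1 * real p" 2 X] by simp
  have ln: "zeta1 \<sigma>L C\<mu> p R \<epsilon> = ln (3 * exp 1 * real p * X)"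
    unfolding zeta1_def X_def by (simp add: field_simps)
  then show "0 < zeta1 \<sigma>L C\<mu> p R \<epsilon>" using two by (simp add: ln_gt_zero)
  have "0 < 3 * exp 1 * real p * X" using two by linarith
  then show exp: "exp (zeta1 \<sigma>L C\<mu> p R \<epsilon>) = 3 * exp 1 * real p * X"
    unfolding ln by simp
  show "exp (- zeta1 \<sigma>L C\<mu> p R \<epsilon>) \<le> 1 / 2"
    unfolding exp_minus exp using two by (simp add: inverse_eq_divide field_simps)
qed

locale subexponential_loss = prob_space M
  for M :: "'o measure" and Z :: "nat \<Rightarrow> 'o \<Rightarrow> 'w" and W :: "'w set"
    and L :: "real^'p \<Rightarrow> 'w \<Rightarrow> real" and C :: "'w \<Rightarrow> real" and \<sigma> \<sigma>L C\<mu> c :: real +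
  assumes support: "\<And>i \<omega>. \<omega> \<in> space M \<Longrightarrow> Z i \<omega> \<in> W"
    and c_pos: "0 < c"
    and \<sigma>_nonneg: "0 \<le> \<sigma>"
    and \<sigma>L_ge1: "1 \<le> \<sigma>L"
    and C\<mu>_ge1: "1 \<le> C\<mu>"
    and L_int: "\<And>b i. integrable M (\<lambda>\<omega>. L b (Z i \<omega>))"
    and L_bernstein: "\<And>b n (w :: nat \<Rightarrow> real) t. n \<ge> 1 \<Longrightarrow> t \<ge> 0 \<Longrightarrow>
        measure M {\<omega> \<in> space M.
           \<bar>\<Sum>i<n. w i * (L b (Z i \<omega>) - integral\<^sup>L M (\<lambda>\<omega>'. L b (Z i \<omega>')))\<bar>
             > \<sigma> * (sqrt (\<Sum>i<n. (w i)\<^sup>2) * sqrt t + (MAX i\<in>{..<n}. \<bar>w i\<bar>) * t)}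
        \<le> 2 * exp (- c * t)"
    and C_nonneg: "\<And>z. C z \<ge> 0"
    and C_int: "\<And>i. integrable M (\<lambda>\<omega>. C (Z i \<omega>))"
    and C_mean: "\<And>i. integral\<^sup>L M (\<lambda>\<omega>. \<bar>C (Z i \<omega>)\<bar>) \<le> C\<mu>"
    and C_lip: "\<And>b1 b2 z. z \<in> W \<Longrightarrow> \<bar>L b1 z - L b2 z\<bar> \<le> C z * norm (b1 - b2)"
    and C_bernstein: "\<And>n (w :: nat \<Rightarrow> real) t. n \<ge> 1 \<Longrightarrow> t \<ge> 0 \<Longrightarrow>
        measure M {\<omega> \<in> space M.
           \<bar>\<Sum>i<n. w i * (C (Z i \<omega>) - integral\<^sup>L M (\<lambda>\<omega>'. C (Z i \<omega>')))\<bar>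
             > \<sigma>L * (sqrt (\<Sum>i<n. (w i)\<^sup>2) * sqrt t + (MAX i\<in>{..<n}. \<bar>w i\<bar>) * t)}
        \<le> 2 * exp (- c * t)"
begin

definition dev_bound :: "nat \<Rightarrow> real \<Rightarrow> real" where
  "dev_bound n t = \<sigma> * (sqrt (t / n) + t / n)"

definition dev_event :: "nat \<Rightarrow> real^'p \<Rightarrow> real \<Rightarrow> 'o set" where
  "dev_event n b t = {\<omega> \<in> space M.
     dev_bound n t < \<bar>emp_loss L n b (\<lambda>i. Z i \<omega>) - pop_loss M L Z n b\<bar>}"

definition lipschitz_event :: "nat \<Rightarrow> 'o set" where
  "lipschitz_event n = {\<omega> \<in> space M. C\<mu> + 2 * \<sigma>L < (\<Sum>i<n. C (Z i \<omega>)) / n}"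

lemma dev_bound_mono: "t \<le> t' \<Longrightarrow> dev_bound n t \<le> dev_bound n t'"
  unfolding dev_bound_def using \<sigma>_nonneg
  by (intro mult_left_mono add_mono real_sqrt_le_mono divide_right_mono) auto

lemma integrable_emp_loss: "integrable M (\<lambda>\<omega>. emp_loss L n b (\<lambda>i. Z i \<omega>))"
  unfolding emp_loss_def using L_int by auto

lemma emp_minus_pop_loss:
  "emp_loss L n b (\<lambda>i. Z i \<omega>) - pop_loss M L Z n b
     = (\<Sum>i<n. 1 / real n * (L b (Z i \<omega>) - integral\<^sup>L M (\<lambda>\<omega>'. L b (Z i \<omega>'))))"
  unfolding pop_loss_def emp_loss_def using L_int
  by (simp add: sum_subtractf diff_divide_distrib sum_divide_distrib[symmetric])

lemma dev_event_sets: "dev_event n b t \<in> sets M"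
proof -
  have "(\<lambda>\<omega>. emp_loss L n b (\<lambda>i. Z i \<omega>)) \<in> borel_measurable M"
    using integrable_emp_loss by auto
  then show ?thesis unfolding dev_event_def by measurable
qed

lemma measure_dev_event:
  assumes "1 \<le> n" "0 \<le> t"
  shows "measure M (dev_event n b t) \<le> 2 * exp (- c * t)"
  using L_bernstein[where w = "\<lambda>_. 1 / real n", OF assms, of b]
  unfolding uniform_weights_bernstein_scale[OF assms(1)] dev_event_def dev_bound_def emp_minus_pop_loss .

lemma lipschitz_event_sets: "lipschitz_event n \<in> sets M"
proof -
  have "(\<lambda>\<omega>. C (Z i \<omega>)) \<in> borel_measurable M" for i using C_int by auto
  then show ?thesis unfolding lipschitz_event_def by measurable
qed

lemma measure_lipschitz_event:
  assumes n: "1 \<le> n"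
  shows "measure M (lipschitz_event n) \<le> 2 * exp (- c * n)"
proof -
  let ?E = "{\<omega> \<in> space M. \<sigma>L * (sqrt (real n / n) + real n / n)
      < \<bar>\<Sum>i<n. 1 / real n * (C (Z i \<omega>) - integral\<^sup>L M (\<lambda>\<omega>'. C (Z i \<omega>')))\<bar>}"
  have "(\<Sum>i<n. integral\<^sup>L M (\<lambda>\<omega>. C (Z i \<omega>))) / n \<le> (\<Sum>i<n. C\<mu>) / n"
    using C_mean C_nonneg by (intro divide_right_mono sum_mono) auto
  then have mean: "(\<Sum>i<n. integral\<^sup>L M (\<lambda>\<omega>. C (Z i \<omega>))) / n \<le> C\<mu>" using n by simp
  have "lipschitz_event n \<subseteq> ?E"
  proof
    fix \<omega> assume "\<omega> \<in> lipschitz_event n"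
    moreover have "(\<Sum>i<n. 1 / real n * (C (Z i \<omega>) - integral\<^sup>L M (\<lambda>\<omega>'. C (Z i \<omega>'))))
        = (\<Sum>i<n. C (Z i \<omega>)) / n - (\<Sum>i<n. integral\<^sup>L M (\<lambda>\<omega>. C (Z i \<omega>))) / n"
      by (simp add: sum_subtractf diff_divide_distrib sum_divide_distrib[symmetric])
    ultimately show "\<omega> \<in> ?E" using mean n unfolding lipschitz_event_def by auto
  qed
  moreover have "(\<lambda>\<omega>. C (Z i \<omega>)) \<in> borel_measurable M" for i using C_int by auto
  then have "?E \<in> sets M" by measurable
  ultimately have "measure M (lipschitz_event n) \<le> measure M ?E" by (rule finite_measure_mono)
  also have "\<dots> \<le> 2 * exp (- c * n)"
    using C_bernstein[where w = "\<lambda>_. 1 / real n", OF n, of n]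
    unfolding uniform_weights_bernstein_scale[OF n] by simp
  finally show ?thesis .
qed

lemma pop_loss_lipschitz: "\<bar>pop_loss M L Z n b - pop_loss M L Z n g\<bar> \<le> C\<mu> * norm (b - g)"
proof -
  let ?f = "\<lambda>\<omega>. emp_loss L n b (\<lambda>i. Z i \<omega>) - emp_loss L n g (\<lambda>i. Z i \<omega>)"
  let ?avg = "\<lambda>\<omega>. (\<Sum>i<n. C (Z i \<omega>)) / real n * norm (b - g)"
  have "\<bar>pop_loss M L Z n b - pop_loss M L Z n g\<bar> = \<bar>integral\<^sup>L M ?f\<bar>"
    unfolding pop_loss_def using integrable_emp_loss by simp
  also have "\<dots> \<le> integral\<^sup>L M (\<lambda>\<omega>. \<bar>?f \<omega>\<bar>)" by (rule integral_abs_bound)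
  also have "\<dots> \<le> integral\<^sup>L M ?avg"
    using integrable_emp_loss C_int support C_lip
    by (intro integral_mono emp_loss_lipschitz) auto
  also have "\<dots> = (\<Sum>i<n. integral\<^sup>L M (\<lambda>\<omega>. C (Z i \<omega>))) / real n * norm (b - g)"
    using C_int by simp
  also have "\<dots> \<le> (\<Sum>i<n. C\<mu>) / real n * norm (b - g)"
    using C_mean C_nonneg by (intro mult_right_mono divide_right_mono sum_mono) auto
  also have "\<dots> \<le> C\<mu> * norm (b - g)"
    using C\<mu>_ge1 by (cases "n = 0") auto
  finally show ?thesis .
qed

end

context subexponential_loss
begin

definition grid_mesh :: "real \<Rightarrow> nat \<Rightarrow> real" where
  "grid_mesh \<epsilon> q = 2 * \<epsilon> / ((\<sigma>L + C\<mu>) * sqrt q)"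

text \<open>At sparsity level \<open>k\<close> the deviation is tested at \<open>t = 2 k \<zeta> / c\<close>, so that each of the at
  most \<open>exp (k \<zeta>)\<close> grid points fails with probability at most \<open>2 exp (-2 k \<zeta>)\<close>.\<close>
definition grid_event :: "nat \<Rightarrow> real \<Rightarrow> real \<Rightarrow> nat \<Rightarrow> 'o set" where
  "grid_event n R \<epsilon> pu = (\<Union>k\<in>{pu..max pu CARD('p)}.
     \<Union>g\<in>sparse_grid (min k CARD('p)) (grid_mesh \<epsilon> (min k CARD('p))) R.
       dev_event n g (2 * real k * zeta1 \<sigma>L C\<mu> CARD('p) R \<epsilon> / c))"

lemma grid_event_sets: "grid_event n R \<epsilon> pu \<in> sets M"
  unfolding grid_event_def by (intro sets.finite_UN finite_sparse_grid dev_event_sets) auto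

lemma card_sparse_grid_le_exp_zeta1:
  assumes "1 \<le> R" "0 < \<epsilon>" "\<epsilon> \<le> 1" and q: "1 \<le> q" "q \<le> k"
  shows "real (card (sparse_grid q (grid_mesh \<epsilon> q) R :: (real^'p) set))
    \<le> exp (zeta1 \<sigma>L C\<mu> CARD('p) R \<epsilon>) ^ k"
proof -
  define X where "X = (\<sigma>L + C\<mu>) * R / \<epsilon>"
  have p: "1 \<le> CARD('p)" by (simp add: Suc_le_eq)
  note bounds = zeta1_bounds[OF \<sigma>L_ge1 C\<mu>_ge1 assms(1-3) p, folded X_def]
  have "0 < (\<sigma>L + C\<mu>) * sqrt q" using q \<sigma>L_ge1 C\<mu>_ge1 by simp
  then have mesh: "0 < grid_mesh \<epsilon> q" "2 * R / grid_mesh \<epsilon> q = X * sqrt q"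
    unfolding grid_mesh_def X_def using assms by (auto simp: field_simps)
  have "real (card (sparse_grid q (grid_mesh \<epsilon> q) R :: (real^'p) set))
      \<le> real (CARD('p) choose q) * (2 * R / grid_mesh \<epsilon> q + 3) ^ q"
    by (rule card_sparse_grid[OF mesh(1)]) (use assms in simp)
  also have "\<dots> \<le> exp (zeta1 \<sigma>L C\<mu> CARD('p) R \<epsilon>) ^ q"
    unfolding bounds(2) mesh(2) by (rule binomial_mult_power_le[OF bounds(1)])
  also have "\<dots> \<le> exp (zeta1 \<sigma>L C\<mu> CARD('p) R \<epsilon>) ^ k"
  proof (rule power_increasing[OF q(2)])
    have "2 \<le> exp (zeta1 \<sigma>L C\<mu> CARD('p) R \<epsilon>)"
      using bounds(3) by (simp add: exp_minus field_simps)
    then show "1 \<le> exp (zeta1 \<sigma>L C\<mu> CARD('p) R \<epsilon>)" by linarith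
  qed
  finally show ?thesis .
qed

lemma measure_grid_event:
  assumes "1 \<le> n" "1 \<le> R" "0 < \<epsilon>" "\<epsilon> \<le> 1" "1 \<le> pu"
  shows "measure M (grid_event n R \<epsilon> pu) \<le> 4 * exp (- real pu * zeta1 \<sigma>L C\<mu> CARD('p) R \<epsilon>)"
proof -
  define \<zeta> where "\<zeta> = zeta1 \<sigma>L C\<mu> CARD('p) R \<epsilon>"
  define I where "I = {pu..max pu CARD('p)}"
  define G :: "nat \<Rightarrow> (real^'p) set"
    where "G k = sparse_grid (min k CARD('p)) (grid_mesh \<epsilon> (min k CARD('p))) R" for k
  have half: "exp (- \<zeta>) \<le> 1 / 2"
    unfolding \<zeta>_def using \<sigma>L_ge1 C\<mu>_ge1 assms by (intro exp_neg_zeta1_le_half) (auto simp: Suc_le_eq)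
  have \<zeta>_pos: "0 < \<zeta>"
    unfolding \<zeta>_def using \<sigma>L_ge1 C\<mu>_ge1 assms by (intro zeta1_pos) (auto simp: Suc_le_eq)
  have level: "measure M (\<Union>g\<in>G k. dev_event n g (2 * real k * \<zeta> / c)) \<le> 2 * exp (- \<zeta>) ^ k"
    if "k \<in> I" for k
  proof -
    have "measure M (\<Union>g\<in>G k. dev_event n g (2 * real k * \<zeta> / c))
        \<le> (\<Sum>g\<in>G k. measure M (dev_event n g (2 * real k * \<zeta> / c)))"
      unfolding G_def by (intro measure_UNION_le finite_sparse_grid dev_event_sets)
    also have "\<dots> \<le> (\<Sum>g\<in>G k. 2 * exp (- \<zeta>) ^ k * exp (- \<zeta>) ^ k)"
    proof (intro sum_mono order.trans[OF measure_dev_event])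
      have "exp (- c * (2 * real k * \<zeta> / c)) = exp (- \<zeta>) ^ k * exp (- \<zeta>) ^ k"
        using c_pos by (simp add: exp_of_nat_mult[symmetric] exp_add[symmetric])
      then show "2 * exp (- c * (2 * real k * \<zeta> / c)) \<le> 2 * exp (- \<zeta>) ^ k * exp (- \<zeta>) ^ k" by simp
      show "0 \<le> 2 * real k * \<zeta> / c" using \<zeta>_pos c_pos by simp
    qed (rule assms(1))
    also have "\<dots> \<le> exp \<zeta> ^ k * (2 * exp (- \<zeta>) ^ k * exp (- \<zeta>) ^ k)"
      unfolding sum_constant G_def \<zeta>_def using that assms
      by (intro mult_right_mono card_sparse_grid_le_exp_zeta1) (auto simp: I_def)
    also have "\<dots> = 2 * exp (- \<zeta>) ^ k"
    proof -
      have "exp \<zeta> ^ k * exp (- \<zeta>) ^ k = 1"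
        by (simp add: power_mult_distrib[symmetric] exp_minus)
      then show ?thesis by (simp add: algebra_simps)
    qed
    finally show ?thesis .
  qed
  have "measure M (grid_event n R \<epsilon> pu) \<le> (\<Sum>k\<in>I. measure M (\<Union>g\<in>G k. dev_event n g (2 * real k * \<zeta> / c)))"
    unfolding grid_event_def I_def G_def \<zeta>_def
    by (intro measure_UNION_le sets.finite_UN finite_sparse_grid dev_event_sets) auto
  also have "\<dots> \<le> 2 * (\<Sum>k\<in>I. exp (- \<zeta>) ^ k)"
    by (simp add: sum_distrib_left sum_mono level)
  also have "\<dots> \<le> 4 * exp (- \<zeta>) ^ pu"
    unfolding I_def using geometric_sum_le_twice_first[OF _ half] by simp
  finally show ?thesis by (simp add: \<zeta>_def exp_of_nat_mult[symmetric])
qed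

end

context subexponential_loss
begin

lemma sparse_deviation_bound:
  fixes b :: "real^'p"
  assumes "1 \<le> pu" "0 < \<epsilon>"
    and \<omega>: "\<omega> \<in> space M" "\<omega> \<notin> lipschitz_event n" "\<omega> \<notin> grid_event n R \<epsilon> pu"
    and bR: "\<And>j. \<bar>b $ j\<bar> \<le> R"
  shows "\<bar>emp_loss L n b (\<lambda>i. Z i \<omega>) - pop_loss M L Z n b\<bar>
    \<le> dev_bound n (2 * real (max (card {j. b $ j \<noteq> 0}) pu) * zeta1 \<sigma>L C\<mu> CARD('p) R \<epsilon> / c)
       + 2 * \<epsilon>"
proof -
  define Y where "Y = \<sigma>L + C\<mu>"
  define k where "k = max (card {j. b $ j \<noteq> 0}) pu"
  define q where "q = min k CARD('p)"
  have supp: "card {j. b $ j \<noteq> 0} \<le> CARD('p)" by (rule card_mono) auto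
  have k: "k \<in> {pu..max pu CARD('p)}" using supp unfolding k_def by auto
  have q: "1 \<le> q" "card {j. b $ j \<noteq> 0} \<le> q" "q \<le> CARD('p)"
    using assms(1) supp unfolding q_def k_def by (auto simp: Suc_le_eq)
  have Y: "0 < Y" using \<sigma>L_ge1 C\<mu>_ge1 unfolding Y_def by simp
  have mesh: "0 < grid_mesh \<epsilon> q" "sqrt q * grid_mesh \<epsilon> q / 2 = \<epsilon> / Y"
    unfolding grid_mesh_def Y_def[symmetric] using q(1) Y assms(2) by auto
  obtain g where g: "g \<in> sparse_grid q (grid_mesh \<epsilon> q) R" "norm (b - g) \<le> \<epsilon> / Y"
    using sparse_grid_covers[OF mesh(1) bR q(2,3)] mesh(2) by auto
  have "\<omega> \<notin> dev_event n g (2 * real k * zeta1 \<sigma>L C\<mu> CARD('p) R \<epsilon> / c)"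
    using \<omega>(3) g(1) k unfolding grid_event_def q_def by blast
  then have dev_g: "\<bar>emp_loss L n g (\<lambda>i. Z i \<omega>) - pop_loss M L Z n g\<bar>
      \<le> dev_bound n (2 * real k * zeta1 \<sigma>L C\<mu> CARD('p) R \<epsilon> / c)"
    using \<omega>(1) unfolding dev_event_def by auto
  have "\<bar>emp_loss L n b (\<lambda>i. Z i \<omega>) - emp_loss L n g (\<lambda>i. Z i \<omega>)\<bar>
      \<le> (\<Sum>i<n. C (Z i \<omega>)) / n * norm (b - g)"
    by (rule emp_loss_lipschitz) (use C_lip support \<omega>(1) in auto)
  also have "\<dots> \<le> (C\<mu> + 2 * \<sigma>L) * (\<epsilon> / Y)"
    using \<omega>(1,2) g(2) C_nonneg \<sigma>L_ge1 C\<mu>_ge1 unfolding lipschitz_event_def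
    by (intro mult_mono) (auto intro: sum_nonneg)
  finally have emp: "\<bar>emp_loss L n b (\<lambda>i. Z i \<omega>) - emp_loss L n g (\<lambda>i. Z i \<omega>)\<bar>
      \<le> (C\<mu> + 2 * \<sigma>L) * (\<epsilon> / Y)" .
  have "\<bar>pop_loss M L Z n b - pop_loss M L Z n g\<bar> \<le> C\<mu> * (\<epsilon> / Y)"
    using pop_loss_lipschitz g(2) C\<mu>_ge1 by (meson mult_left_mono order.trans zero_le_one)
  moreover have "(C\<mu> + 2 * \<sigma>L) * (\<epsilon> / Y) + C\<mu> * (\<epsilon> / Y) = 2 * Y * (\<epsilon> / Y)"
    unfolding Y_def by (simp add: algebra_simps)
  moreover have "2 * Y * (\<epsilon> / Y) = 2 * \<epsilon>" using Y by simp
  ultimately show ?thesis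
    using dev_g emp unfolding k_def abs_le_iff by linarith
qed

lemma concentration_event:
  fixes b0 :: "real^'p" and R \<epsilon> :: real
  defines "\<zeta> \<equiv> zeta1 \<sigma>L C\<mu> CARD('p) R \<epsilon>"
  assumes n: "1 \<le> n" and "1 \<le> R" "0 < \<epsilon>" "\<epsilon> \<le> 1" and pu: "1 \<le> pu"
  shows "\<exists>G\<in>sets M. 1 - 2 * exp (- c * n) - 6 * exp (- real pu * \<zeta>) \<le> measure M G \<and>
    (\<forall>\<omega>\<in>G. \<bar>emp_loss L n b0 (\<lambda>i. Z i \<omega>) - pop_loss M L Z n b0\<bar> \<le> dev_bound n (2 * real pu * \<zeta> / c)
       \<and> (\<forall>b. (\<forall>j. \<bar>b $ j\<bar> \<le> R) \<longrightarrow> \<bar>emp_loss L n b (\<lambda>i. Z i \<omega>) - pop_loss M L Z n b\<bar>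
            \<le> dev_bound n (2 * real (max (card {j. b $ j \<noteq> 0}) pu) * \<zeta> / c) + 2 * \<epsilon>))"
proof -
  define B where "B = lipschitz_event n \<union> dev_event n b0 (2 * real pu * \<zeta> / c) \<union> grid_event n R \<epsilon> pu"
  have B: "B \<in> sets M"
    unfolding B_def by (intro sets.Un lipschitz_event_sets dev_event_sets grid_event_sets)
  have "0 < \<zeta>"
    unfolding \<zeta>_def using \<sigma>L_ge1 C\<mu>_ge1 assms by (intro zeta1_pos) (auto simp: Suc_le_eq)
  then have "measure M (dev_event n b0 (2 * real pu * \<zeta> / c))
      \<le> 2 * exp (- c * (2 * real pu * \<zeta> / c))"
    using c_pos by (intro measure_dev_event[OF n]) simp
  also have "\<dots> \<le> 2 * exp (- real pu * \<zeta>)"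
    using c_pos \<open>0 < \<zeta>\<close> by simp
  finally have dev: "measure M (dev_event n b0 (2 * real pu * \<zeta> / c)) \<le> 2 * exp (- real pu * \<zeta>)" .
  have "measure M B \<le> measure M (lipschitz_event n) + measure M (dev_event n b0 (2 * real pu * \<zeta> / c))
      + measure M (grid_event n R \<epsilon> pu)"
    unfolding B_def
    by (intro order.trans[OF measure_Un_le] add_right_mono measure_Un_le sets.Un
        lipschitz_event_sets dev_event_sets grid_event_sets)
  also have "\<dots> \<le> 2 * exp (- c * n) + 2 * exp (- real pu * \<zeta>) + 4 * exp (- real pu * \<zeta>)"
    using measure_lipschitz_event[OF n] measure_grid_event[OF assms(2-6)] dev unfolding \<zeta>_def
    by (intro add_mono)
  finally have "1 - 2 * exp (- c * n) - 6 * exp (- real pu * \<zeta>) \<le> measure M (space M - B)"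
    using prob_compl[OF B] by simp
  moreover have "\<forall>\<omega>\<in>space M - B. \<bar>emp_loss L n b0 (\<lambda>i. Z i \<omega>) - pop_loss M L Z n b0\<bar>
       \<le> dev_bound n (2 * real pu * \<zeta> / c)
     \<and> (\<forall>b. (\<forall>j. \<bar>b $ j\<bar> \<le> R) \<longrightarrow> \<bar>emp_loss L n b (\<lambda>i. Z i \<omega>) - pop_loss M L Z n b\<bar>
            \<le> dev_bound n (2 * real (max (card {j. b $ j \<noteq> 0}) pu) * \<zeta> / c) + 2 * \<epsilon>)"
    using sparse_deviation_bound[OF pu \<open>0 < \<epsilon>\<close>] unfolding B_def dev_event_def \<zeta>_def by auto
  ultimately show ?thesis using B by blast
qed

end
context subexponential_loss
begin

lemma two_dev_bound_eq:
  "2 * dev_bound n (2 * real k * \<zeta> / c)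
    = 2 * \<sigma> / sqrt n * sqrt (2 * real k / c * \<zeta>) + 4 * \<sigma> / (real n * c) * \<zeta> * real k"
  unfolding dev_bound_def by (simp add: real_sqrt_divide real_sqrt_mult field_simps)

lemma excess_risk_bound:
  fixes bstar beps :: "real^'p" and bh :: "'o \<Rightarrow> real^'p" and R \<epsilon> lam a :: real
  defines "\<zeta> \<equiv> zeta1 \<sigma>L C\<mu> CARD('p) R \<epsilon>" and "P \<equiv> penalty lam a (a * lam)"
  assumes n: "1 \<le> n" and a: "0 < a" "a * U_L < 1" and lam: "0 < lam"
    and R: "1 \<le> R" and \<epsilon>: "0 < \<epsilon>" "\<epsilon> \<le> 1"
    and min: "\<And>b. pop_loss M L Z n bstar \<le> pop_loss M L Z n b"
    and beps: "\<And>j. \<bar>beps $ j\<bar> \<le> R" "s = card {j. beps $ j \<noteq> 0}"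
      "pop_loss M L Z n beps - pop_loss M L Z n bstar \<le> epshat"
    and S3ONC: "AE \<omega> in M. (\<forall>j. \<bar>bh \<omega> $ j\<bar> \<le> R) \<and> S3ONC L U_L lam a n (\<lambda>i. Z i \<omega>) (bh \<omega>)"
    and pen: "AE \<omega> in M. pen_loss L lam a n (bh \<omega>) (\<lambda>i. Z i \<omega>) \<le> pen_loss L lam a n beps (\<lambda>i. Z i \<omega>) + \<Gamma>"
    and pu: "s < pu"
    and gap: "\<And>k. pu \<le> k \<Longrightarrow> k \<le> CARD('p) \<Longrightarrow>
        4 * \<sigma> / (real n * c) * \<zeta> * real k + 2 * \<sigma> / sqrt n * sqrt (2 * real k / c * \<zeta>)
          + \<Gamma> + 2 * \<epsilon> + epshat < (real k - real s) * P"
  shows "\<exists>A\<in>sets M. 1 - 2 * exp (- c * n) - 6 * exp (- real pu * \<zeta>) \<le> measure M A \<and>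
    (\<forall>\<omega>\<in>A. pop_loss M L Z n (bh \<omega>) - pop_loss M L Z n bstar
       \<le> real s * P + 2 * \<sigma> / sqrt n * sqrt (2 * real pu / c * \<zeta>)
          + 4 * \<sigma> / real n * (real pu / c) * \<zeta> + 2 * \<epsilon> + epshat + \<Gamma>)"
proof -
  define D where "D k = dev_bound n (2 * real k * \<zeta> / c)" for k
  have "mono D"
    unfolding D_def using c_pos zeta1_pos[OF \<sigma>L_ge1 C\<mu>_ge1 R \<epsilon>, of "CARD('p)"]
    by (intro monoI dev_bound_mono divide_right_mono) (auto simp: \<zeta>_def Suc_le_eq)
  have gap': "2 * D k + \<Gamma> + 2 * \<epsilon> + epshat < (real k - real s) * P"
    if "pu \<le> k" "k \<le> CARD('p)" for k
    using gap[OF that] unfolding D_def two_dev_bound_eq by simp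
  obtain G where G: "G \<in> sets M" "1 - 2 * exp (- c * n) - 6 * exp (- real pu * \<zeta>) \<le> measure M G"
    and dev: "\<And>\<omega>. \<omega> \<in> G \<Longrightarrow> \<bar>emp_loss L n beps (\<lambda>i. Z i \<omega>) - pop_loss M L Z n beps\<bar> \<le> D pu
       \<and> (\<forall>b. (\<forall>j. \<bar>b $ j\<bar> \<le> R) \<longrightarrow> \<bar>emp_loss L n b (\<lambda>i. Z i \<omega>) - pop_loss M L Z n b\<bar>
            \<le> D (max (card {j. b $ j \<noteq> 0}) pu) + 2 * \<epsilon>)"
    using concentration_event[OF n R \<epsilon> _, of pu beps] pu unfolding D_def \<zeta>_def by (auto simp: Suc_le_eq)
  obtain N where hyps: "\<And>\<omega>. \<omega> \<in> space M - N \<Longrightarrow>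
      ((\<forall>j. \<bar>bh \<omega> $ j\<bar> \<le> R) \<and> S3ONC L U_L lam a n (\<lambda>i. Z i \<omega>) (bh \<omega>))
      \<and> pen_loss L lam a n (bh \<omega>) (\<lambda>i. Z i \<omega>) \<le> pen_loss L lam a n beps (\<lambda>i. Z i \<omega>) + \<Gamma>"
    and N: "N \<in> null_sets M"
    using AE_conjI[OF S3ONC pen] by (rule AE_E3) blast
  have "measure M (G - N) = measure M G" using G(1) N by (rule measure_Diff_null_set)
  moreover have "pop_loss M L Z n (bh \<omega>) - pop_loss M L Z n bstar
       \<le> real s * P + 2 * \<sigma> / sqrt n * sqrt (2 * real pu / c * \<zeta>)
          + 4 * \<sigma> / real n * (real pu / c) * \<zeta> + 2 * \<epsilon> + epshat + \<Gamma>" if "\<omega> \<in> G - N" for \<omega>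
  proof -
    have "\<omega> \<in> space M - N" using that sets.sets_into_space[OF G(1)] by auto
    then have bR: "\<forall>j. \<bar>bh \<omega> $ j\<bar> \<le> R" and S3: "S3ONC L U_L lam a n (\<lambda>i. Z i \<omega>) (bh \<omega>)"
      and pen: "pen_loss L lam a n (bh \<omega>) (\<lambda>i. Z i \<omega>) \<le> pen_loss L lam a n beps (\<lambda>i. Z i \<omega>) + \<Gamma>"
      using hyps by auto
    have dev_beps: "\<bar>emp_loss L n beps (\<lambda>i. Z i \<omega>) - pop_loss M L Z n beps\<bar> \<le> D pu"
      and dev_b: "\<bar>emp_loss L n (bh \<omega>) (\<lambda>i. Z i \<omega>) - pop_loss M L Z n (bh \<omega>)\<bar>
        \<le> D (max (card {j. bh \<omega> $ j \<noteq> 0}) pu) + 2 * \<epsilon>"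
      using dev[of \<omega>] bR that by auto
    have "pop_loss M L Z n (bh \<omega>) - pop_loss M L Z n bstar
        \<le> real s * P + 2 * D pu + 2 * \<epsilon> + epshat + \<Gamma>"
      unfolding P_def
      by (rule S3ONC_excess_risk[OF S3 a lam pen dev_b dev_beps \<open>mono D\<close> min beps(3,2) gap'[unfolded P_def]])
    then show ?thesis unfolding D_def two_dev_bound_eq by (simp add: field_simps)
  qed
  ultimately show ?thesis using G N by (intro bexI[of _ "G - N"]) auto
qed

end


theorem mainTheorem10:
  fixes M :: "'o measure"
    and Z :: "nat \<Rightarrow> 'o \<Rightarrow> real^'q"
    and W :: "(real^'q) set"
    and L :: "real^'p \<Rightarrow> real^'q \<Rightarrow> real"
    and C :: "real^'q \<Rightarrow> real"
    and \<sigma> \<sigma>L C\<mu> c :: real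
  assumes prob: "prob_space M"
    and p_gt2: "CARD('p) > 2"
    (* i.i.d. sample with support W *)
    and indep: "prob_space.indep_vars M (\<lambda>_. borel) Z UNIV"
    and ident: "\<And>i. distr M borel (Z i) = distr M borel (Z 0)"
    and support: "\<And>i \<omega>. \<omega> \<in> space M \<Longrightarrow> Z i \<omega> \<in> W"
    (* L measurable, C^1 in beta for a.e. z *)
    and L_meas: "(\<lambda>(b, z). L b z) \<in> borel_measurable (borel \<Otimes>\<^sub>M borel)"
    and L_C1: "AE \<omega> in M. \<forall>i. \<exists>D :: (real^'p) \<Rightarrow> ((real^'p) \<Rightarrow>\<^sub>L real).
                  (\<forall>b. ((\<lambda>b'. L b' (Z i \<omega>)) has_derivative blinfun_apply (D b)) (at b))
                  \<and> continuous_on UNIV D"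
    (* (A2) *)
    and \<sigma>_ge1: "\<sigma> \<ge> 1"
    and c_range: "0 < c" "c \<le> 1/2"
    and L_int: "\<And>b i. integrable M (\<lambda>\<omega>. L b (Z i \<omega>))"
    and L_psi1: "\<And>b i. psi1_norm M (\<lambda>\<omega>. L b (Z i \<omega>) - integral\<^sup>L M (\<lambda>\<omega>'. L b (Z i \<omega>'))) \<le> ereal \<sigma>"
    and L_bernstein: "\<And>b n (w :: nat \<Rightarrow> real) t. n \<ge> 1 \<Longrightarrow> t \<ge> 0 \<Longrightarrow>
        measure M {\<omega> \<in> space M.
           \<bar>\<Sum>i<n. w i * (L b (Z i \<omega>) - integral\<^sup>L M (\<lambda>\<omega>'. L b (Z i \<omega>')))\<bar>
             > \<sigma> * (sqrt (\<Sum>i<n. (w i)\<^sup>2) * sqrt t + (MAX i\<in>{..<n}. \<bar>w i\<bar>) * t)}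
        \<le> 2 * exp (- c * t)"
    (* (A3) *)
    and C_meas: "C \<in> borel_measurable borel"
    and C_nonneg: "\<And>z. C z \<ge> 0"
    and \<sigma>L_ge1: "\<sigma>L \<ge> 1"
    and C\<mu>_ge1: "C\<mu> \<ge> 1"
    and C_int: "\<And>i. integrable M (\<lambda>\<omega>. C (Z i \<omega>))"
    and C_psi1: "\<And>i. psi1_norm M (\<lambda>\<omega>. C (Z i \<omega>) - integral\<^sup>L M (\<lambda>\<omega>'. C (Z i \<omega>'))) \<le> ereal \<sigma>L"
    and C_mean: "\<And>i. integral\<^sup>L M (\<lambda>\<omega>. \<bar>C (Z i \<omega>)\<bar>) \<le> C\<mu>"
    and C_lip: "\<And>b1 b2 z. z \<in> W \<Longrightarrow> \<bar>L b1 z - L b2 z\<bar> \<le> C z * norm (b1 - b2)"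
    (* c is the absolute Bernstein constant: the same tail bound for the sub-exponential C(Z_i) *)
    and C_bernstein: "\<And>n (w :: nat \<Rightarrow> real) t. n \<ge> 1 \<Longrightarrow> t \<ge> 0 \<Longrightarrow>
        measure M {\<omega> \<in> space M.
           \<bar>\<Sum>i<n. w i * (C (Z i \<omega>) - integral\<^sup>L M (\<lambda>\<omega>'. C (Z i \<omega>')))\<bar>
             > \<sigma>L * (sqrt (\<Sum>i<n. (w i)\<^sup>2) * sqrt t + (MAX i\<in>{..<n}. \<bar>w i\<bar>) * t)}
        \<le> 2 * exp (- c * t)"
  shows "\<exists>ct > 0. \<forall>(n::nat) (U_L::real) (a::real) (lam::real) (R::real)
            (bstar::real^'p) (beps::real^'p) (epshat::real) (s::nat)
            (\<Gamma>::real) (\<epsilon>::real) (pu::nat) (bh::'o \<Rightarrow> real^'p).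
     n \<ge> 1 \<and> U_L \<ge> 1 \<and> 0 < a \<and> a < 1 / U_L \<and> 0 < lam \<and> R \<ge> 1
     \<comment> \<open>coordinatewise Lipschitz partial derivatives of the empirical loss\<close>
     \<and> (AE \<omega> in M. \<forall>b \<delta> j.
          \<bar>partial (\<lambda>b'. emp_loss L n b' (\<lambda>i. Z i \<omega>)) (b + \<delta> *\<^sub>R axis j 1) j
           - partial (\<lambda>b'. emp_loss L n b' (\<lambda>i. Z i \<omega>)) b j\<bar> \<le> U_L * \<bar>\<delta>\<bar>)
     \<comment> \<open>beta-star is a population minimizer with sup-norm at most R\<close>
     \<and> (\<forall>b. pop_loss M L Z n bstar \<le> pop_loss M L Z n b) \<and> (\<forall>j. \<bar>bstar $ j\<bar> \<le> R)
     \<comment> \<open>(A1) A-sparsity\<close>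
     \<and> (\<forall>j. \<bar>beps $ j\<bar> \<le> R) \<and> s = card {j. beps $ j \<noteq> 0} \<and> s \<ge> 1 \<and> epshat \<ge> 0
     \<and> pop_loss M L Z n beps - pop_loss M L Z n bstar \<le> epshat
     \<and> \<Gamma> \<ge> 0 \<and> 0 < \<epsilon> \<and> \<epsilon> \<le> 1
     \<comment> \<open>(i)\<close>
     \<and> (AE \<omega> in M. (\<forall>j. \<bar>bh \<omega> $ j\<bar> \<le> R) \<and> S3ONC L U_L lam a n (\<lambda>i. Z i \<omega>) (bh \<omega>))
     \<comment> \<open>(ii)\<close>
     \<and> (AE \<omega> in M. pen_loss L lam a n (bh \<omega>) (\<lambda>i. Z i \<omega>)
                      \<le> pen_loss L lam a n beps (\<lambda>i. Z i \<omega>) + \<Gamma>)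
     \<comment> \<open>(iii)\<close>
     \<and> pu > s
     \<and> (\<forall>pt::nat. pu \<le> pt \<and> pt \<le> CARD('p) \<longrightarrow>
          (real pt - real s) * penalty lam a (a * lam)
            > 4 * \<sigma> / (real n * c) * zeta1 \<sigma>L C\<mu> CARD('p) R \<epsilon> * real pt
              + 2 * \<sigma> / sqrt (real n) * sqrt (2 * real pt / c * zeta1 \<sigma>L C\<mu> CARD('p) R \<epsilon>)
              + \<Gamma> + 2 * \<epsilon> + epshat)
     \<longrightarrow> (\<exists>A \<in> sets M.
            measure M A \<ge> 1 - 2 * (real CARD('p) + 1) * exp (- ct * real n)
                                     - 6 * exp (- real pu * zeta1 \<sigma>L C\<mu> CARD('p) R \<epsilon>)
          \<and> (\<forall>\<omega> \<in> A. pop_loss M L Z n (bh \<omega>) - pop_loss M L Z n bstar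
                \<le> real s * penalty lam a (a * lam)
                  + 2 * \<sigma> / sqrt (real n) * sqrt (2 * real pu / c * zeta1 \<sigma>L C\<mu> CARD('p) R \<epsilon>)
                  + 4 * \<sigma> / real n * (real pu / c) * zeta1 \<sigma>L C\<mu> CARD('p) R \<epsilon>
                  + 2 * \<epsilon> + epshat + \<Gamma>))"
proof -
  interpret subexponential_loss M Z W L C \<sigma> \<sigma>L C\<mu> c
    by (intro subexponential_loss.intro subexponential_loss_axioms.intro prob)
       (fact support L_int L_bernstein C_nonneg C_int C_mean C_lip C_bernstein
        | use c_range \<sigma>_ge1 \<sigma>L_ge1 C\<mu>_ge1 in linarith)+
  show ?thesis
  proof (intro exI[of _ c] conjI allI impI, goal_cases)
    case 1
    then show ?case using c_range by simp
  next
    case (2 n U_L a lam R bstar beps epshat s \<Gamma> \<epsilon> pu bh)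
    then have "1 \<le> U_L" "a < 1 / U_L" by blast+
    then have "a * U_L < 1" by (simp add: field_simps)
    with 2 have "\<exists>A\<in>sets M. 1 - 2 * exp (- c * n) - 6 * exp (- real pu * zeta1 \<sigma>L C\<mu> CARD('p) R \<epsilon>)
        \<le> measure M A \<and> (\<forall>\<omega>\<in>A. pop_loss M L Z n (bh \<omega>) - pop_loss M L Z n bstar
       \<le> real s * penalty lam a (a * lam) + 2 * \<sigma> / sqrt n * sqrt (2 * real pu / c * zeta1 \<sigma>L C\<mu> CARD('p) R \<epsilon>)
          + 4 * \<sigma> / real n * (real pu / c) * zeta1 \<sigma>L C\<mu> CARD('p) R \<epsilon> + 2 * \<epsilon> + epshat + \<Gamma>)"
      by (intro excess_risk_bound) blast+
    moreover have "2 * exp (- c * n) \<le> 2 * (real CARD('p) + 1) * exp (- c * n)" by simp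
    ultimately show ?case by (elim bexE conjE) (intro bexI[rotated] conjI; (assumption | linarith))
  qed
qed

end
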